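(* In the Gödel setting described in the context, let $(A,B,R)$ be a $\top$-normalized fuzzy context and $(g,f)\in\mathcal{F}_N$ such that for every $a\in A$ there exists $b\in B$ with $g(b)>R(a,b)$. Then $f^{\downarrow}(b)\le g^{\uparrow\downarrow}(b)$ for all $b\in B$; consequently, in the fuzzy concept lattice, $\langle f^{\downarrow},f^{\downarrow\uparrow}\rangle\preceq\langle g^{\uparrow\downarrow},g^{\uparrow}\rangle$.
   Context: Gödel setting: all truth-value sets are $[0,1]$ with the usual order, $x\&y=\min\{x,y\}$, and $z\swarrow y=z\nwarrow y$ equals $1$ if $y\le z$ and $z$ otherwise. A fuzzy context is $(A,B,R)$ with nonempty finite sets $A,B$ and $R\colon A\times B\to[0,1]$. For $g\colon B\to[0,1]$, $f\colon A\to[0,1]$: $g^{\uparrow}(a)=\inf_{b\in B}(R(a,b)\swarrow g(b))$, $f^{\downarrow}(b)=\inf_{a\in A}(R(a,b)\nwarrow f(a))$, $g^{\uparrow_N}(a)=\inf_{b\in B}(g(b)\swarrow R(a,b))$, $f^{\downarrow^N}(b)=\inf_{a\in A}(f(a)\nwarrow R(a,b))$, $g^{\uparrow_\pi}(a)=\sup_{b\in B}\min\{R(a,b),g(b)\}$. $\mathcal{F}_N=\{(g,f)\mid g^{\uparrow_N}=f,\ f^{\downarrow^N}=g\}$. A (fuzzy) concept is a pair $\langle g,f\rangle$ with $g^\uparrow=f$, $f^\downarrow=g$, ordered by $\langle g_1,f_1\rangle\preceq\langle g_2,f_2\rangle$ iff $g_1\le g_2$ pointwise. The context is normalized if no row $R(a,\cdot)$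 and no column $R(\cdot,b)$ is identically $0$, and no row and no column has all values different from $0$; it is $\top$-normalized if moreover for every $a\in A$ there is $b_a\in B$ with $R(a,b_a)=1$. *)

theory Defs
  imports Complex_Main
begin

text \<open>Goedel residuum on [0,1]: z swarrow y = z nwarrow y = (if y \<le> z then 1 else z).\<close>
definition gres :: "real \<Rightarrow> real \<Rightarrow> real" where
  "gres z y = (if y \<le> z then 1 else z)"

definition fuzzy_context :: "'a set \<Rightarrow> 'b set \<Rightarrow> ('a \<Rightarrow> 'b \<Rightarrow> real) \<Rightarrow> bool" where
  "fuzzy_context A B R \<longleftrightarrow> finite A \<and> finite B \<and> A \<noteq> {} \<and> B \<noteq> {} \<and>
     (\<forall>a\<in>A. \<forall>b\<in>B. 0 \<le> R a b \<and> R a b \<le> 1)"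

definition fuzzy_set_on :: "'c set \<Rightarrow> ('c \<Rightarrow> real) \<Rightarrow> bool" where
  "fuzzy_set_on X h \<longleftrightarrow> (\<forall>x\<in>X. 0 \<le> h x \<and> h x \<le> 1)"

definition normalized :: "'a set \<Rightarrow> 'b set \<Rightarrow> ('a \<Rightarrow> 'b \<Rightarrow> real) \<Rightarrow> bool" where
  "normalized A B R \<longleftrightarrow>
     (\<forall>a\<in>A. \<exists>b\<in>B. R a b \<noteq> 0) \<and> (\<forall>b\<in>B. \<exists>a\<in>A. R a b \<noteq> 0) \<and>
     (\<forall>a\<in>A. \<exists>b\<in>B. R a b = 0) \<and> (\<forall>b\<in>B. \<exists>a\<in>A. R a b = 0)"

definition top_normalized :: "'a set \<Rightarrow> 'b set \<Rightarrow> ('a \<Rightarrow> 'b \<Rightarrow> real) \<Rightarrow> bool" where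
  "top_normalized A B R \<longleftrightarrow> normalized A B R \<and> (\<forall>a\<in>A. \<exists>b\<in>B. R a b = 1)"

definition up :: "'b set \<Rightarrow> ('a \<Rightarrow> 'b \<Rightarrow> real) \<Rightarrow> ('b \<Rightarrow> real) \<Rightarrow> 'a \<Rightarrow> real" where
  "up B R g a = (INF b\<in>B. gres (R a b) (g b))"

definition down :: "'a set \<Rightarrow> ('a \<Rightarrow> 'b \<Rightarrow> real) \<Rightarrow> ('a \<Rightarrow> real) \<Rightarrow> 'b \<Rightarrow> real" where
  "down A R f b = (INF a\<in>A. gres (R a b) (f a))"

definition upN :: "'b set \<Rightarrow> ('a \<Rightarrow> 'b \<Rightarrow> real) \<Rightarrow> ('b \<Rightarrow> real) \<Rightarrow> 'a \<Rightarrow> real" where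
  "upN B R g a = (INF b\<in>B. gres (g b) (R a b))"

definition downN :: "'a set \<Rightarrow> ('a \<Rightarrow> 'b \<Rightarrow> real) \<Rightarrow> ('a \<Rightarrow> real) \<Rightarrow> 'b \<Rightarrow> real" where
  "downN A R f b = (INF a\<in>A. gres (f a) (R a b))"

definition F_N :: "'a set \<Rightarrow> 'b set \<Rightarrow> ('a \<Rightarrow> 'b \<Rightarrow> real) \<Rightarrow> (('b \<Rightarrow> real) \<times> ('a \<Rightarrow> real)) set" where
  "F_N A B R = {(g, f). fuzzy_set_on B g \<and> fuzzy_set_on A f \<and>
      (\<forall>a\<in>A. upN B R g a = f a) \<and> (\<forall>b\<in>B. downN A R f b = g b)}"

definition is_concept :: "'a set \<Rightarrow> 'b set \<Rightarrow> ('a \<Rightarrow> 'b \<Rightarrow> real) \<Rightarrow> ('b \<Rightarrow> real) \<Rightarrow> ('a \<Rightarrow> real) \<Rightarrow> bool" where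
  "is_concept A B R g f \<longleftrightarrow> fuzzy_set_on B g \<and> fuzzy_set_on A f \<and>
      (\<forall>a\<in>A. up B R g a = f a) \<and> (\<forall>b\<in>B. down A R f b = g b)"

definition concept_le :: "'b set \<Rightarrow> ('b \<Rightarrow> real) \<times> ('a \<Rightarrow> real) \<Rightarrow> ('b \<Rightarrow> real) \<times> ('a \<Rightarrow> real) \<Rightarrow> bool" where
  "concept_le B c1 c2 \<longleftrightarrow> (\<forall>b\<in>B. fst c1 b \<le> fst c2 b)"

end

theory Submission
  imports Defs
begin

text \<open>
  Since \<open>f = g\<^sup>\<up>\<^sub>N\<close> and \<open>g = f\<^sup>\<down>\<^sup>N\<close>, every \<open>b\<close> with \<open>g b > R a b\<close> forces \<open>R a b \<le> f a\<close>,
  and then \<open>g\<^sup>\<up> a \<le> (R a b \<swarrow> g b) = R a b \<le> f a\<close>.  So \<open>g\<^sup>\<up> \<le> f\<close>, and the antitone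
  operator \<open>\<down>\<close> yields \<open>f\<^sup>\<down> \<le> g\<^sup>\<up>\<^sup>\<down>\<close>.  The two pairs are concepts by the usual closure
  identities \<open>h\<^sup>\<up>\<^sup>\<down>\<^sup>\<up> = h\<^sup>\<up>\<close> and \<open>h\<^sup>\<down>\<^sup>\<up>\<^sup>\<down> = h\<^sup>\<down>\<close> of the antitone Galois connection.
\<close>

lemma le_gres_iff: "x \<le> 1 \<Longrightarrow> x \<le> gres z y \<longleftrightarrow> min x y \<le> z"
  by (auto simp: gres_def)

lemma gres_bounded: "0 \<le> z \<Longrightarrow> z \<le> 1 \<Longrightarrow> 0 \<le> gres z y \<and> gres z y \<le> 1"
  by (auto simp: gres_def)

lemma gres_antimono: "z \<le> 1 \<Longrightarrow> y1 \<le> y2 \<Longrightarrow> gres z y2 \<le> gres z y1"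
  by (auto simp: gres_def)

definition rel_transpose :: "('a \<Rightarrow> 'b \<Rightarrow> real) \<Rightarrow> 'b \<Rightarrow> 'a \<Rightarrow> real" where
  [simp]: "rel_transpose R b a = R a b"

lemma rel_transpose_transpose [simp]: "rel_transpose (rel_transpose R) = R"
  by (simp add: fun_eq_iff)

lemma down_eq_up_transpose: "down A R = up A (rel_transpose R)"
  by (simp add: down_def up_def fun_eq_iff)

lemma fuzzy_context_transpose: "fuzzy_context A B R \<Longrightarrow> fuzzy_context B A (rel_transpose R)"
  by (auto simp: fuzzy_context_def)

lemma up_le: "finite B \<Longrightarrow> b \<in> B \<Longrightarrow> up B R g a \<le> gres (R a b) (g b)"
  unfolding up_def by (auto intro: cINF_lower bdd_below_finite)

lemma le_up_iff:
  "finite B \<Longrightarrow> B \<noteq> {} \<Longrightarrow> x \<le> up B R g a \<longleftrightarrow> (\<forall>b\<in>B. x \<le> gres (R a b) (g b))"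
  unfolding up_def by (auto simp: le_cINF_iff bdd_below_finite)

lemma fuzzy_set_on_up:
  assumes "fuzzy_context A B R"
  shows "fuzzy_set_on A (up B R g)"
  unfolding fuzzy_set_on_def
proof
  fix a assume "a \<in> A"
  with assms have B: "finite B" "B \<noteq> {}" and R: "\<forall>b\<in>B. 0 \<le> R a b \<and> R a b \<le> 1"
    by (auto simp: fuzzy_context_def)
  then obtain b where "b \<in> B" by blast
  with B R have "up B R g a \<le> 1"
    using up_le gres_bounded order_trans by metis
  moreover have "0 \<le> up B R g a"
    using B R gres_bounded by (auto simp: le_up_iff)
  ultimately show "0 \<le> up B R g a \<and> up B R g a \<le> 1" by simp
qed

lemma up_antimono:
  assumes "fuzzy_context A B R" "a \<in> A" "\<forall>b\<in>B. g1 b \<le> g2 b"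
  shows "up B R g2 a \<le> up B R g1 a"
  using assms unfolding up_def fuzzy_context_def
  by (intro cINF_mono) (auto intro!: bexI gres_antimono bdd_below_finite)

lemma le_up_transpose_up:
  assumes ctx: "fuzzy_context A B R" and f: "fuzzy_set_on A f" and a: "a \<in> A"
  shows "f a \<le> up B R (up A (rel_transpose R) f) a"
proof -
  have "f a \<le> gres (R a b) (up A (rel_transpose R) f b)" if b: "b \<in> B" for b
  proof -
    have "fuzzy_set_on B (up A (rel_transpose R) f)"
      using ctx by (intro fuzzy_set_on_up fuzzy_context_transpose)
    moreover have "up A (rel_transpose R) f b \<le> gres (R a b) (f a)"
      using ctx a up_le[of A a "(rel_transpose R)" f b] by (simp add: fuzzy_context_def)
    ultimately have "min (up A (rel_transpose R) f b) (f a) \<le> R a b"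
      using b le_gres_iff by (auto simp: fuzzy_set_on_def)
    then show ?thesis
      using f a le_gres_iff by (simp add: fuzzy_set_on_def min.commute)
  qed
  then show ?thesis
    using ctx by (simp add: le_up_iff fuzzy_context_def)
qed

lemma up_transpose_up_up:
  assumes ctx: "fuzzy_context A B R" and g: "fuzzy_set_on B g" and a: "a \<in> A"
  shows "up B R (up A (rel_transpose R) (up B R g)) a = up B R g a"
proof (rule antisym)
  have "g b \<le> up A (rel_transpose R) (up B R g) b" if "b \<in> B" for b
    using le_up_transpose_up[OF fuzzy_context_transpose[OF ctx] g that] by simp
  then show "up B R (up A (rel_transpose R) (up B R g)) a \<le> up B R g a"
    using ctx a by (intro up_antimono) auto
  show "up B R g a \<le> up B R (up A (rel_transpose R) (up B R g)) a"
    using ctx a by (intro le_up_transpose_up fuzzy_set_on_up)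
qed

lemma is_concept_down_up:
  assumes ctx: "fuzzy_context A B R" and g: "fuzzy_set_on B g"
  shows "is_concept A B R (down A R (up B R g)) (up B R g)"
  unfolding is_concept_def down_eq_up_transpose
  using ctx g up_transpose_up_up[OF ctx g]
  by (simp add: fuzzy_set_on_up fuzzy_context_transpose)

lemma is_concept_down:
  assumes ctx: "fuzzy_context A B R" and f: "fuzzy_set_on A f"
  shows "is_concept A B R (down A R f) (up B R (down A R f))"
  unfolding is_concept_def down_eq_up_transpose
  using ctx f up_transpose_up_up[OF fuzzy_context_transpose[OF ctx] f]
  by (simp add: fuzzy_set_on_up fuzzy_context_transpose)

lemma up_le_of_le_downN:
  assumes "finite A" "finite B" "a \<in> A" "b \<in> B"
    and g_le: "g b \<le> downN A R f b" and gt: "R a b < g b"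
  shows "up B R g a \<le> f a"
proof -
  have "downN A R f b \<le> gres (f a) (R a b)"
    unfolding downN_def using assms by (auto intro: cINF_lower bdd_below_finite)
  with g_le gt have "R a b \<le> f a"
    by (auto simp: gres_def split: if_splits)
  moreover have "up B R g a \<le> gres (R a b) (g b)"
    using assms by (intro up_le)
  ultimately show ?thesis
    using gt by (auto simp: gres_def)
qed

theorem mainTheorem15:
  fixes A :: "'a set" and B :: "'b set" and R :: "'a \<Rightarrow> 'b \<Rightarrow> real"
    and g :: "'b \<Rightarrow> real" and f :: "'a \<Rightarrow> real"
  assumes ctx: "fuzzy_context A B R"
    and tn: "top_normalized A B R"
    and FN: "(g, f) \<in> F_N A B R"
    and gt: "\<forall>a\<in>A. \<exists>b\<in>B. g b > R a b"
  shows "(\<forall>b\<in>B. down A R f b \<le> down A R (up B R g) b)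
    \<and> is_concept A B R (down A R f) (up B R (down A R f))
    \<and> is_concept A B R (down A R (up B R g)) (up B R g)
    \<and> concept_le B (down A R f, up B R (down A R f)) (down A R (up B R g), up B R g)"
proof -
  have fuzzy: "fuzzy_set_on B g" "fuzzy_set_on A f"
    and g_eq: "\<forall>b\<in>B. downN A R f b = g b"
    using FN by (auto simp: F_N_def)
  have up_le_f: "up B R g a \<le> f a" if a: "a \<in> A" for a
  proof -
    obtain b where "b \<in> B" "R a b < g b"
      using gt a by blast
    with ctx g_eq a show ?thesis
      by (intro up_le_of_le_downN) (auto simp: fuzzy_context_def)
  qed
  have down_le: "\<forall>b\<in>B. down A R f b \<le> down A R (up B R g) b"
    unfolding down_eq_up_transpose
    by (auto intro!: up_antimono[OF fuzzy_context_transpose[OF ctx]] up_le_f)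
  show ?thesis
    using down_le is_concept_down[OF ctx fuzzy(2)] is_concept_down_up[OF ctx fuzzy(1)]
    by (simp add: concept_le_def)
qed

end
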